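(* The set $\mathbb Q$ of rational numbers, canonically arranged as below, has size sequence $$\sigma(\mathbb Q)=2\,\sigma(\mathbb I)\cdot(\alpha+1)+1,\quad\text{i.e. } \sigma_n(\mathbb Q)=2(n+1)\Phi(n)+1,$$ where $\Phi(n)=\sum_{i=1}^n\varphi(i)$ with $\varphi$ Euler's totient function; moreover $\sigma(\mathbb Q)\approx_\mathcal F\alpha^3$, and more precisely $$\tfrac{3}{5}(\alpha^3+\alpha^2)<_\mathcal F\sigma(\mathbb Q)<_\mathcal F\alpha^3-\alpha.$$
   Context: $\mathbb N=\{1,2,\dots\}$. Positive rationals are represented by triples $(p,k,m)$, $p\in\mathbb N_0$, $k,m\in\mathbb N$, $\gcd(k,m)=1$, $k\le m$, standing for $p+k/m$; the triple lies in the $n$-th component of $\mathbb Q^+$ where $n=\max\{\ell(p),m\}$, with $\ell(0)=1$ and $\ell(p)=p$ for $p\ge1$ (this is the product arrangement of $\mathbb N_0\times\mathbb I$, $\mathbb I=(0,1]\cap\mathbb Q$). Negative rationals $\mathbb Q^-$ are arranged so that $-x$ lies in the same component as $x\in\mathbb Q^+$, and $0$ lies in the first component; $\mathbb Q=\mathbb Q^+\cup\mathbb Q^-\cup\{0\}$ is arranged by componentwise union. The size sequence is $\sigma(A)=(\sigma_n(A))_n$ with $\sigma_n(A)$ the number of elements of $A$ in components $1,\dots,n$. $\alpha=(n)_n$; operations on sequences are componentwise; constants are identified with constant sequences. $(a_n)<_\mathcal F(b_n)$ iff $a_n<b_n$ for all sufficiently large $n$; $(a_n)\approx_\mathcal F(b_n)$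 iff some $k\in\mathbb N$ has $ka_n\ge b_n$ for all large $n$ and some $k$ has $kb_n\ge a_n$ for all large $n$. *)

theory Defs
  imports Complex_Main "HOL-Number_Theory.Totient"
begin

definition ell :: "nat \<Rightarrow> nat" where
  "ell p = (if p = 0 then 1 else p)"

text \<open>Triple representation (p,k,m) of a positive rational x = p + k/m with
  gcd k m = 1, 1 \<le> k \<le> m: p is the integer part with k/m \<in> (0,1].\<close>
definition triple_of :: "rat \<Rightarrow> nat \<times> nat \<times> nat" where
  "triple_of x = (let p = \<lceil>x\<rceil> - 1; (k, m) = quotient_of (x - of_int p)
                  in (nat p, nat k, nat m))"

text \<open>Component of a positive rational in the product arrangement of N0 \<times> I.\<close>
definition comp_pos :: "rat \<Rightarrow> nat" where
  "comp_pos x = (case triple_of x of (p, k, m) \<Rightarrow> max (ell p) m)"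

definition comp_Q :: "rat \<Rightarrow> nat" where
  "comp_Q x = (if x = 0 then 1 else comp_pos \<bar>x\<bar>)"

definition sigma_Q :: "nat \<Rightarrow> nat" where
  "sigma_Q n = card {x :: rat. 1 \<le> comp_Q x \<and> comp_Q x \<le> n}"

definition sigma_I :: "nat \<Rightarrow> nat" where
  "sigma_I n = card {x :: rat. 0 < x \<and> x \<le> 1 \<and> nat (snd (quotient_of x)) \<le> n}"

definition Phi :: "nat \<Rightarrow> nat" where
  "Phi n = (\<Sum>i=1..n. totient i)"

definition F_less :: "(nat \<Rightarrow> real) \<Rightarrow> (nat \<Rightarrow> real) \<Rightarrow> bool" where
  "F_less a b \<longleftrightarrow> (\<forall>\<^sub>F n in sequentially. a n < b n)"

definition F_approx :: "(nat \<Rightarrow> real) \<Rightarrow> (nat \<Rightarrow> real) \<Rightarrow> bool" where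
  "F_approx a b \<longleftrightarrow>
     (\<exists>k::nat. k \<ge> 1 \<and> (\<forall>\<^sub>F n in sequentially. real k * a n \<ge> b n)) \<and>
     (\<exists>k::nat. k \<ge> 1 \<and> (\<forall>\<^sub>F n in sequentially. real k * b n \<ge> a n))"

end

theory Submission
  imports Defs "HOL-Computational_Algebra.Squarefree" "HOL-Analysis.Gamma_Function"
    "HOL-Real_Asymp.Real_Asymp"
begin

(* Splitting a positive rational of component at most n into its integer part p \<le> n and a
   fraction in (0, 1] with denominator at most n shows that components 1..n hold 0 and
   2 (n + 1) Phi n further rationals, Phi n counting those fractions.

   As totient m < m for m > 1, eventually 2 Phi n < n^2 - n, giving the upper bound. The lower
   bound needs Phi n \<ge> 3 n^2 / pi^2 - O(n log n), as 3 / pi^2 = 0.3039... barely exceeds 3 / 10.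
   Moebius inversion of  \<Sum>d\<le>n. Phi (n div d) = n (n + 1) / 2  expresses Phi n as
   n^2 / 2 * \<Sum>d\<le>n. mu d / d^2  up to n H_n / 2, and the identity
   \<Sum>d a \<le> n. mu d / (d a)^2 = 1, together with  \<Sum>a\<le>q. 1 / a^2 \<ge> pi^2 / 6 - 1 / q,
   bounds this Moebius sum below by 6 / pi^2 * (1 - 2 H_n / n). *)

definition moebius_mu :: "nat \<Rightarrow> real" where
  "moebius_mu n = (if squarefree n then (-1) ^ card (prime_factors n) else 0)"

lemma abs_moebius_mu_le: "\<bar>moebius_mu n\<bar> \<le> 1"
  by (simp add: moebius_mu_def)

lemma moebius_mu_prime_mult:
  assumes p: "prime p" and "\<not> p dvd e" and "e > 0"
  shows "moebius_mu (p * e) = - moebius_mu e"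
proof -
  have "coprime p e"
    using assms by (simp add: prime_imp_coprime)
  then have squarefree: "squarefree (p * e) \<longleftrightarrow> squarefree e"
    using squarefree_multD(2)[of p e] squarefree_mult_coprime squarefree_prime[OF p] by blast
  have "prime_factors (p * e) = insert p (prime_factors e)" "p \<notin> prime_factors e"
    using assms by (auto simp: prime_factors_product prime_prime_factors)
  then have "card (prime_factors (p * e)) = Suc (card (prime_factors e))"
    by simp
  then show ?thesis
    by (simp add: moebius_mu_def squarefree)
qed

lemma sum_moebius_mu_multiples_of_prime:
  assumes p: "prime p" "p dvd n" and "n > 0"
  shows "(\<Sum>d | d dvd n \<and> p dvd d. moebius_mu d) = - (\<Sum>d | d dvd n \<and> \<not> p dvd d. moebius_mu d)"
proof -
  define A where "A = {d. d dvd n \<and> \<not> p dvd d}"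
  define B where "B = {d. d dvd n \<and> p dvd d}"
  have "finite B"
    using \<open>n > 0\<close> by (auto simp: B_def)
  have "(*) p ` A \<subseteq> B"
    using p by (auto simp: A_def B_def prime_imp_coprime intro!: divides_mult)
  moreover have "moebius_mu d = 0" if d: "d \<in> B - (*) p ` A" for d
  proof -
    have "d dvd n" "p dvd d" "d \<notin> (*) p ` A"
      using d by (auto simp: B_def)
    obtain e where e: "d = p * e"
      using \<open>p dvd d\<close> by (rule dvdE)
    have "e dvd n"
      using \<open>d dvd n\<close> e by (simp add: dvd_mult_right)
    with e \<open>d \<notin> (*) p ` A\<close> have "p dvd e"
      by (auto simp: A_def)
    with e have "p ^ 2 dvd d"
      by (simp add: power2_eq_square)
    then have "\<not> squarefree d"
      using p(1) by (metis not_squarefreeI not_prime_unit)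
    then show ?thesis
      by (simp add: moebius_mu_def)
  qed
  ultimately have "sum moebius_mu B = sum moebius_mu ((*) p ` A)"
    using \<open>finite B\<close> by (intro sum.mono_neutral_right) auto
  also have "\<dots> = (\<Sum>e\<in>A. moebius_mu (p * e))"
    using p by (subst sum.reindex) (auto simp: inj_on_def prime_gt_0_nat)
  also have "\<dots> = (\<Sum>e\<in>A. - moebius_mu e)"
    using p \<open>n > 0\<close> by (intro sum.cong) (auto simp: A_def moebius_mu_prime_mult intro: Nat.gr0I)
  finally show ?thesis
    by (simp add: A_def B_def sum_negf)
qed

lemma sum_moebius_mu_divisors:
  assumes "n > 0"
  shows "(\<Sum>d | d dvd n. moebius_mu d) = (if n = 1 then 1 else 0)"
proof (cases "n = 1")
  case True
  then show ?thesis
    by (simp add: moebius_mu_def)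
next
  case False
  then obtain p where p: "prime p" "p dvd n"
    using assms by (metis nat_neq_iff prime_factor_nat less_one)
  have "(\<Sum>d | d dvd n. moebius_mu d)
      = (\<Sum>d\<in>{d. d dvd n} \<inter> {d. p dvd d}. moebius_mu d) + (\<Sum>d\<in>{d. d dvd n} - {d. p dvd d}. moebius_mu d)"
    using assms by (intro sum.Int_Diff) simp
  also have "\<dots> = (\<Sum>d | d dvd n \<and> p dvd d. moebius_mu d) + (\<Sum>d | d dvd n \<and> \<not> p dvd d. moebius_mu d)"
    by (simp only: Collect_conj_eq Collect_neg_eq Diff_eq)
  finally show ?thesis
    using sum_moebius_mu_multiples_of_prime[OF p assms] False by simp
qed

lemma sum_divisor_pairs:
  fixes f :: "nat \<Rightarrow> nat \<Rightarrow> 'a::comm_monoid_add"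
  shows "(\<Sum>m=1..n. \<Sum>d | d dvd m. f d (m div d)) = (\<Sum>d=1..n. \<Sum>a=1..n div d. f d a)"
proof -
  have "(\<Sum>m=1..n. \<Sum>d | d dvd m. f d (m div d))
      = (\<Sum>(m, d)\<in>(SIGMA m:{1..n}. {d. d dvd m}). f d (m div d))"
    by (rule sum.Sigma) auto
  also have "\<dots> = (\<Sum>(d, a)\<in>(SIGMA d:{1..n}. {1..n div d}). f d a)"
  proof (rule sum.reindex_bij_witness[where i = "\<lambda>(d, a). (d * a, d)" and j = "\<lambda>(m, d). (d, m div d)"])
    fix x assume "x \<in> (SIGMA d:{1..n}. {1..n div d})"
    then show "(case x of (d, a) \<Rightarrow> (d * a, d)) \<in> (SIGMA m:{1..n}. {d. d dvd m})"
      by (auto simp: less_eq_div_iff_mult_less_eq mult.commute)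
  next
    fix y assume "y \<in> (SIGMA m:{1..n}. {d. d dvd m})"
    then obtain m d where y: "y = (m, d)" "1 \<le> m" "m \<le> n" "d dvd m"
      by auto
    then have "0 < d" "d \<le> m"
      by (auto intro: dvd_pos_nat dvd_imp_le)
    with y show "(case y of (m, d) \<Rightarrow> (d, m div d)) \<in> (SIGMA d:{1..n}. {1..n div d})"
      by (auto simp: div_le_mono div_greater_zero_iff Suc_le_eq)
  qed (auto simp: mult.commute)
  also have "\<dots> = (\<Sum>d=1..n. \<Sum>a=1..n div d. f d a)"
    by (rule sum.Sigma[symmetric]) auto
  finally show ?thesis .
qed

lemma sum_moebius_mu_hyperbola:
  fixes f :: "nat \<Rightarrow> real"
  assumes "n \<ge> 1"
  shows "(\<Sum>d=1..n. \<Sum>a=1..n div d. moebius_mu d * f (d * a)) = f 1"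
proof -
  have "(\<Sum>d=1..n. \<Sum>a=1..n div d. moebius_mu d * f (d * a))
      = (\<Sum>m=1..n. \<Sum>d | d dvd m. moebius_mu d * f (d * (m div d)))"
    by (rule sum_divisor_pairs[symmetric])
  also have "\<dots> = (\<Sum>m=1..n. f m * (\<Sum>d | d dvd m. moebius_mu d))"
    by (intro sum.cong) (auto simp: sum_distrib_left mult.commute intro!: sum.cong)
  also have "\<dots> = (\<Sum>m=1..n. if m = 1 then f 1 else 0)"
    by (intro sum.cong) (auto simp: sum_moebius_mu_divisors)
  also have "\<dots> = f 1"
    using assms by simp
  finally show ?thesis .
qed

lemma sum_divisors_flip:
  fixes g :: "nat \<Rightarrow> 'a::comm_monoid_add"
  assumes "m > 0"
  shows "(\<Sum>d | d dvd m. g (m div d)) = (\<Sum>d | d dvd m. g d)"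
  by (rule sum.reindex_bij_witness[where i = "\<lambda>d. m div d" and j = "\<lambda>d. m div d"])
     (use assms in \<open>auto simp: dvd_div_eq_mult div_div_eq_right elim!: dvdE\<close>)

lemma sum_Phi_div: "(\<Sum>d=1..n. real (Phi (n div d))) = real n * (real n + 1) / 2"
proof -
  have "(\<Sum>d=1..n. real (Phi (n div d))) = (\<Sum>d=1..n. \<Sum>a=1..n div d. real (totient a))"
    by (simp add: Phi_def)
  also have "\<dots> = (\<Sum>m=1..n. \<Sum>d | d dvd m. real (totient (m div d)))"
    by (rule sum_divisor_pairs[symmetric])
  also have "\<dots> = (\<Sum>m=1..n. real m)"
    by (intro sum.cong) (simp_all add: sum_divisors_flip totient_divisor_sum flip: of_nat_sum)
  also have "\<dots> = real n * (real n + 1) / 2"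
    using double_gauss_sum_from_Suc_0[of n, where 'a = real] by simp
  finally show ?thesis .
qed

lemma Phi_moebius_inversion:
  assumes "n \<ge> 1"
  shows "real (Phi n) = (\<Sum>d=1..n. moebius_mu d * (real (n div d) * (real (n div d) + 1) / 2))"
proof -
  have "(\<Sum>d=1..n. moebius_mu d * (real (n div d) * (real (n div d) + 1) / 2))
      = (\<Sum>d=1..n. \<Sum>a=1..n div d. moebius_mu d * real (Phi (n div (d * a))))"
    by (simp add: sum_Phi_div[symmetric] sum_distrib_left div_mult2_eq)
  also have "\<dots> = real (Phi n)"
    using sum_moebius_mu_hyperbola[OF assms, of "\<lambda>m. real (Phi (n div m))"] by simp
  finally show ?thesis ..
qed

lemma triangular_number_approx:
  fixes q x :: real
  assumes "x - 1 < q" "q \<le> x" "0 \<le> q"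
  shows "\<bar>q * (q + 1) / 2 - x\<^sup>2 / 2\<bar> \<le> x / 2"
proof -
  have "q * (q + 1) \<le> x * (x + 1)"
    using assms by (intro mult_mono) auto
  moreover have "(x - 1) * x \<le> q * (q + 1)"
  proof (cases "x \<ge> 1")
    case True
    then show ?thesis
      using assms by (intro mult_mono) auto
  next
    case False
    then have "(x - 1) * x \<le> 0"
      using assms by (intro mult_nonpos_nonneg) auto
    moreover have "0 \<le> q * (q + 1)"
      using assms by simp
    ultimately show ?thesis
      by linarith
  qed
  ultimately show ?thesis
    by (simp add: abs_le_iff field_simps power2_eq_square)
qed

lemma real_div_bounds:
  fixes n d :: nat
  assumes "d > 0"
  shows "real n / real d - 1 < real (n div d)" "real (n div d) \<le> real n / real d"
proof -
  have "real n = real d * real (n div d) + real (n mod d)" "real (n mod d) < real d"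
    using assms by (simp_all flip: of_nat_mult of_nat_add)
  then show "real n / real d - 1 < real (n div d)" "real (n div d) \<le> real n / real d"
    using assms by (simp_all add: field_simps)
qed

lemma Phi_ge_moebius_sum:
  assumes "n \<ge> 1"
  shows "real n ^ 2 / 2 * (\<Sum>d=1..n. moebius_mu d / real d ^ 2) - real n / 2 * harm n \<le> real (Phi n)"
proof -
  have "real n ^ 2 / 2 * (moebius_mu d / real d ^ 2) - real n / 2 * inverse (real d)
      \<le> moebius_mu d * (real (n div d) * (real (n div d) + 1) / 2)" if "d \<in> {1..n}" for d
  proof -
    define x where "x = real n / real d"
    define T where "T = real (n div d) * (real (n div d) + 1) / 2"
    have "\<bar>T - x\<^sup>2 / 2\<bar> \<le> x / 2"
      unfolding T_def x_def using that real_div_bounds[of d n]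
      by (intro triangular_number_approx) auto
    then have "\<bar>moebius_mu d\<bar> * \<bar>T - x\<^sup>2 / 2\<bar> \<le> 1 * (x / 2)"
      using abs_moebius_mu_le[of d] by (intro mult_mono) auto
    then have "\<bar>moebius_mu d * (T - x\<^sup>2 / 2)\<bar> \<le> x / 2"
      by (simp add: abs_mult)
    then have "moebius_mu d * (x\<^sup>2 / 2) - x / 2 \<le> moebius_mu d * T"
      unfolding abs_le_iff right_diff_distrib by linarith
    then show ?thesis
      by (simp add: T_def x_def power_divide field_simps)
  qed
  then have "(\<Sum>d=1..n. real n ^ 2 / 2 * (moebius_mu d / real d ^ 2) - real n / 2 * inverse (real d))
      \<le> real (Phi n)"
    unfolding Phi_moebius_inversion[OF assms] by (rule sum_mono)
  then show ?thesis
    by (simp add: harm_def sum_subtractf sum_distrib_left)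
qed

lemma inverse_squares_tail_sums:
  "(\<lambda>k. 1 / real (k + q + 1) ^ 2) sums (pi\<^sup>2 / 6 - (\<Sum>a=1..q. 1 / real a ^ 2))"
proof -
  have "(\<Sum>a=1..q. 1 / real a ^ 2) = (\<Sum>k<q. 1 / (real k + 1) ^ 2)"
    by (simp add: sum.atLeast1_atMost_eq add.commute)
  then show ?thesis
    using sums_split_initial_segment[OF inverse_squares_sums, of q] by (simp add: add_ac)
qed

lemma sum_inverse_squares_le: "(\<Sum>a=1..q. 1 / real a ^ 2) \<le> pi\<^sup>2 / 6"
  using sums_le[OF _ sums_zero inverse_squares_tail_sums[of q]] by simp

lemma sum_inverse_squares_tail_le:
  assumes "q \<ge> 1"
  shows "pi\<^sup>2 / 6 - (\<Sum>a=1..q. 1 / real a ^ 2) \<le> 1 / real q"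
proof -
  have telescope: "(\<lambda>k. 1 / real (k + q) - 1 / real (Suc k + q)) sums (1 / real (0 + q) - 0)"
    by (intro telescope_sums') real_asymp
  have "1 / real (k + q + 1) ^ 2 \<le> 1 / real (k + q) - 1 / real (Suc k + q)" for k
  proof -
    define t where "t = real (k + q)"
    have "1 \<le> t"
      using assms by (simp add: t_def)
    then have "1 / (t + 1) ^ 2 \<le> 1 / (t * (t + 1))"
      by (intro divide_left_mono) (auto simp: power2_eq_square)
    also have "\<dots> = 1 / t - 1 / (t + 1)"
      using \<open>1 \<le> t\<close> by (simp add: field_simps)
    finally show ?thesis
      by (simp add: t_def add_ac)
  qed
  from sums_le[OF this inverse_squares_tail_sums telescope] show ?thesis
    by simp
qed

lemma le_twice_mult_div:
  fixes n d :: nat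
  assumes "1 \<le> d" "d \<le> n"
  shows "n \<le> 2 * d * (n div d)"
proof -
  have "0 < n div d"
    using assms by (simp add: div_greater_zero_iff)
  then have "n mod d < d" "d \<le> d * (n div d)"
    using assms by simp_all
  moreover have "n = d * (n div d) + n mod d"
    by simp
  ultimately show ?thesis
    by linarith
qed

lemma one_le_moebius_sum:
  assumes "n \<ge> 1"
  shows "1 \<le> pi\<^sup>2 / 6 * (\<Sum>d=1..n. moebius_mu d / real d ^ 2) + 2 / real n * harm n"
proof -
  define Z where "Z q = (\<Sum>a=1..q. 1 / real a ^ 2)" for q
  have "moebius_mu d / real d ^ 2 * Z (n div d)
      \<le> pi\<^sup>2 / 6 * (moebius_mu d / real d ^ 2) + 2 / real n * inverse (real d)" if "d \<in> {1..n}" for d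
  proof -
    define e where "e = pi\<^sup>2 / 6 - Z (n div d)"
    have "0 < n div d"
      using that by (simp add: div_greater_zero_iff)
    have "0 \<le> e"
      using sum_inverse_squares_le by (simp add: e_def Z_def)
    have "real n \<le> real (2 * d * (n div d))"
      using that le_twice_mult_div[of d n] by (simp only: of_nat_le_iff atLeastAtMost_iff)
    have "- (moebius_mu d * e) \<le> \<bar>moebius_mu d\<bar> * e"
      using \<open>0 \<le> e\<close> abs_ge_minus_self[of "moebius_mu d * e"] by (simp add: abs_mult)
    also have "\<dots> \<le> e"
      using abs_moebius_mu_le[of d] \<open>0 \<le> e\<close> by (simp add: mult_left_le_one_le)
    also have "\<dots> \<le> 1 / real (n div d)"
      using sum_inverse_squares_tail_le[of "n div d"] \<open>0 < n div d\<close> by (simp add: e_def Z_def)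
    also have "\<dots> \<le> 2 * real d / real n"
      using \<open>real n \<le> real (2 * d * (n div d))\<close> \<open>0 < n div d\<close> that by (simp add: field_simps)
    finally have "- (moebius_mu d * e) \<le> 2 * real d / real n" .
    then have "- (moebius_mu d * e) / real d ^ 2 \<le> 2 / real n * inverse (real d)"
      using that by (simp add: field_simps power2_eq_square)
    then show ?thesis
      using that by (simp add: e_def field_simps)
  qed
  then have "(\<Sum>d=1..n. moebius_mu d / real d ^ 2 * Z (n div d))
      \<le> pi\<^sup>2 / 6 * (\<Sum>d=1..n. moebius_mu d / real d ^ 2) + 2 / real n * harm n"
    by (subst harm_def) (auto simp: sum_distrib_left simp flip: sum.distrib intro: sum_mono)
  moreover have "(\<Sum>d=1..n. moebius_mu d / real d ^ 2 * Z (n div d)) = 1"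
    using sum_moebius_mu_hyperbola[OF assms, of "\<lambda>m. 1 / real m ^ 2"]
    by (simp add: Z_def sum_distrib_left power_mult_distrib)
  ultimately show ?thesis
    by simp
qed

lemma Phi_lower_bound:
  assumes "n \<ge> 1"
  shows "3 / pi\<^sup>2 * real n ^ 2 - 3 / 2 * real n * harm n \<le> real (Phi n)"
proof -
  define S where "S = (\<Sum>d=1..n. moebius_mu d / real d ^ 2)"
  define y where "y = real n * harm n"
  have "pi\<^sup>2 / 6 \<ge> 1"
    using power_mono[of 3 pi 2] pi_gt3 by simp
  have "0 \<le> y"
    by (simp add: y_def harm_nonneg)
  have "real n ^ 2 / 2 - y = real n ^ 2 / 2 * (1 - 2 / real n * harm n)"
    using assms by (simp add: y_def field_simps power2_eq_square)
  also have "\<dots> \<le> real n ^ 2 / 2 * (pi\<^sup>2 / 6 * S)"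
    using one_le_moebius_sum[OF assms] by (intro mult_left_mono) (auto simp: S_def)
  finally have "(real n ^ 2 / 2 - y) / (pi\<^sup>2 / 6) \<le> real n ^ 2 / 2 * S"
    using \<open>pi\<^sup>2 / 6 \<ge> 1\<close> by (simp add: pos_divide_le_eq mult_ac)
  moreover have "(real n ^ 2 / 2 - y) / (pi\<^sup>2 / 6) = 3 / pi\<^sup>2 * real n ^ 2 - y / (pi\<^sup>2 / 6)"
    by (simp add: field_simps)
  moreover have "y / (pi\<^sup>2 / 6) \<le> y / 1"
    using \<open>pi\<^sup>2 / 6 \<ge> 1\<close> \<open>0 \<le> y\<close> by (intro divide_left_mono) auto
  moreover have "real n ^ 2 / 2 * S - y / 2 \<le> real (Phi n)"
    using Phi_ge_moebius_sum[OF assms] by (simp add: S_def y_def)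
  moreover have "3 / 2 * real n * harm n = 3 / 2 * y"
    by (simp add: y_def)
  ultimately show ?thesis
    using \<open>0 \<le> y\<close> by linarith
qed

lemma harm_le_one_plus_ln:
  assumes "n \<ge> 1"
  shows "harm n \<le> 1 + ln (real n)"
  using euler_mascheroni_sequence_decreasing[of 1 n] assms by (simp add: harm_def)

lemma eventually_Phi_gt: "\<forall>\<^sub>F n in sequentially. 3 / 10 * real n ^ 2 < real (Phi n)"
proof -
  define c where "c = 3 / pi\<^sup>2 - 3 / 10"
  have "pi < 3.1416"
    using pi_approx(2) by simp
  then have "pi * pi < 3.1416 * 3.1416"
    by (intro mult_strict_mono) auto
  then have "pi\<^sup>2 < 10"
    by (simp add: power2_eq_square)
  then have "c > 0"
    by (simp add: c_def field_simps)
  then have "\<forall>\<^sub>F n in sequentially. 3 / 2 * real n * (1 + ln (real n)) < c * real n ^ 2"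
    by real_asymp
  then show ?thesis
    using eventually_ge_at_top[of 1]
  proof eventually_elim
    case (elim n)
    have "3 / 2 * real n * harm n \<le> 3 / 2 * real n * (1 + ln (real n))"
      using harm_le_one_plus_ln[OF elim(2)] by (intro mult_left_mono) auto
    moreover have "c * real n ^ 2 = 3 / pi\<^sup>2 * real n ^ 2 - 3 / 10 * real n ^ 2"
      by (simp add: c_def algebra_simps)
    ultimately show ?case
      using elim(1) Phi_lower_bound[OF elim(2)] by linarith
  qed
qed

lemma Phi_upper_bound:
  assumes "n \<ge> 6"
  shows "2 * Phi n + 2 \<le> n * (n - 1)"
  using assms
proof (induction n rule: dec_induct)
  case base
  have "Phi 6 = 12"
    by code_simp
  then show ?case
    by simp
next
  case (step n)
  have "totient (Suc n) < Suc n"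
    using step by (intro totient_less) auto
  then have "2 * Phi (Suc n) + 2 \<le> n * (n - 1) + 2 * n"
    using step.IH by (simp add: Phi_def)
  also have "\<dots> = Suc n * (Suc n - 1)"
    using step by (cases n) (auto simp: algebra_simps)
  finally show ?case .
qed

definition farey :: "nat \<Rightarrow> rat set" where
  "farey n = {x. 0 < x \<and> x \<le> 1 \<and> nat (snd (quotient_of x)) \<le> n}"

lemma quotient_of_farey:
  assumes "x \<in> farey n" "quotient_of x = (a, b)"
  shows "x = of_int a / of_int b" "0 < a" "a \<le> b" "nat b \<le> n" "coprime (nat a) (nat b)"
proof -
  have "0 < b" "coprime a b"
    using assms(2) by (simp_all add: quotient_of_denom_pos quotient_of_coprime)
  show "x = of_int a / of_int b"
    using assms(2) by (rule quotient_of_div)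
  then show "0 < a" "a \<le> b" "nat b \<le> n"
    using assms \<open>0 < b\<close> by (auto simp: farey_def zero_less_divide_iff divide_le_eq_1)
  with \<open>coprime a b\<close> show "coprime (nat a) (nat b)"
    by (simp add: coprime_int_iff[symmetric])
qed

lemma quotient_of_of_nat_div:
  assumes "coprime k m" "m > 0"
  shows "quotient_of (of_nat k / of_nat m :: rat) = (int k, int m)"
proof -
  have "coprime (int k) (int m)" "0 < int m"
    using assms by simp_all
  then have "quotient_of (of_int (int k) / of_int (int m) :: rat) = (int k, int m)"
    by (simp only: Fract_of_int_quotient[symmetric] quotient_of_Fract normalize_stable)
  then show ?thesis
    by (simp only: of_int_of_nat_eq)
qed

lemma bij_betw_farey_totatives:
  "bij_betw (\<lambda>x. (nat (snd (quotient_of x)), nat (fst (quotient_of x))))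
     (farey n) (SIGMA m:{1..n}. totatives m)"
proof (rule bij_betw_byWitness[where f' = "\<lambda>(m, k). of_nat k / of_nat m"])
  show "\<forall>x\<in>farey n. (\<lambda>(m, k). of_nat k / of_nat m)
          (nat (snd (quotient_of x)), nat (fst (quotient_of x))) = x"
  proof
    fix x assume "x \<in> farey n"
    obtain a b where "quotient_of x = (a, b)"
      by fastforce
    with \<open>x \<in> farey n\<close> show "(\<lambda>(m, k). of_nat k / of_nat m)
          (nat (snd (quotient_of x)), nat (fst (quotient_of x))) = x"
      using quotient_of_farey[of x n a b] by simp
  qed
  show "(\<lambda>x. (nat (snd (quotient_of x)), nat (fst (quotient_of x)))) ` farey n
      \<subseteq> (SIGMA m:{1..n}. totatives m)"
  proof (rule image_subsetI)
    fix x assume "x \<in> farey n"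
    obtain a b where "quotient_of x = (a, b)"
      by fastforce
    with \<open>x \<in> farey n\<close> show "(nat (snd (quotient_of x)), nat (fst (quotient_of x)))
      \<in> (SIGMA m:{1..n}. totatives m)"
      using quotient_of_farey[of x n a b] by (auto simp: totatives_def)
  qed
  show "\<forall>y\<in>(SIGMA m:{1..n}. totatives m). (\<lambda>x. (nat (snd (quotient_of x)), nat (fst (quotient_of x))))
          ((\<lambda>(m, k). of_nat k / of_nat m) y) = y"
    by (auto simp: totatives_def quotient_of_of_nat_div coprime_commute)
  show "(\<lambda>(m, k). of_nat k / of_nat m) ` (SIGMA m:{1..n}. totatives m) \<subseteq> farey n"
    by (auto simp: totatives_def farey_def quotient_of_of_nat_div coprime_commute)
qed

lemma
  shows finite_farey: "finite (farey n)"
    and card_farey: "card (farey n) = Phi n"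
proof -
  have "finite (SIGMA m:{1..n}. totatives m)"
    by auto
  then show "finite (farey n)"
    using bij_betw_farey_totatives bij_betw_finite by blast
  have "card (farey n) = card (SIGMA m:{1..n}. totatives m)"
    using bij_betw_farey_totatives by (rule bij_betw_same_card)
  also have "\<dots> = Phi n"
    by (simp add: card_SigmaI Phi_def totient_def)
  finally show "card (farey n) = Phi n" .
qed

lemma sigma_I_eq_Phi: "sigma_I n = Phi n"
  using card_farey by (simp add: sigma_I_def farey_def)

lemma comp_pos_eq:
  "comp_pos x = max (ell (nat (\<lceil>x\<rceil> - 1))) (nat (snd (quotient_of (x - of_int (\<lceil>x\<rceil> - 1)))))"
  by (simp add: comp_pos_def triple_of_def Let_def split: prod.split)

lemma comp_Q_ge_1: "comp_Q x \<ge> 1"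
proof -
  have "1 \<le> ell p" for p
    by (simp add: ell_def)
  then show ?thesis
    by (simp add: comp_Q_def comp_pos_eq le_max_iff_disj)
qed

definition comp_pos_atMost :: "nat \<Rightarrow> rat set" where
  "comp_pos_atMost n = {x. 0 < x \<and> comp_pos x \<le> n}"

lemma ceiling_of_nat_add:
  assumes "0 < y" "y \<le> (1::rat)"
  shows "\<lceil>of_nat p + y\<rceil> = int p + 1"
  using assms by (simp add: ceiling_eq_iff)

lemma bij_betw_comp_pos_atMost:
  assumes "n \<ge> 1"
  shows "bij_betw (\<lambda>x. (nat (\<lceil>x\<rceil> - 1), x - of_int (\<lceil>x\<rceil> - 1))) (comp_pos_atMost n) ({0..n} \<times> farey n)"
proof (rule bij_betw_byWitness[where f' = "\<lambda>(p, y). of_nat p + y"])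
  show "\<forall>x\<in>comp_pos_atMost n. (\<lambda>(p, y). of_nat p + y) (nat (\<lceil>x\<rceil> - 1), x - of_int (\<lceil>x\<rceil> - 1)) = x"
    by (auto simp: comp_pos_atMost_def)
  show "\<forall>z\<in>{0..n} \<times> farey n. (\<lambda>x. (nat (\<lceil>x\<rceil> - 1), x - of_int (\<lceil>x\<rceil> - 1))) ((\<lambda>(p, y). of_nat p + y) z) = z"
    by (auto simp: farey_def ceiling_of_nat_add)
  show "(\<lambda>x. (nat (\<lceil>x\<rceil> - 1), x - of_int (\<lceil>x\<rceil> - 1))) ` comp_pos_atMost n \<subseteq> {0..n} \<times> farey n"
  proof (rule image_subsetI)
    fix x assume x: "x \<in> comp_pos_atMost n"
    define p where "p = \<lceil>x\<rceil> - 1"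
    have "0 < x - of_int p" "x - of_int p \<le> 1"
      by (simp_all add: p_def) linarith+
    moreover have "ell (nat p) \<le> n" "nat (snd (quotient_of (x - of_int p))) \<le> n"
      using x by (simp_all add: comp_pos_atMost_def comp_pos_eq p_def)
    ultimately show "(nat (\<lceil>x\<rceil> - 1), x - of_int (\<lceil>x\<rceil> - 1)) \<in> {0..n} \<times> farey n"
      by (auto simp: farey_def ell_def p_def split: if_splits)
  qed
  show "(\<lambda>(p, y). of_nat p + y) ` ({0..n} \<times> farey n) \<subseteq> comp_pos_atMost n"
  proof clarify
    fix p y assume "p \<in> {0..n}" "y \<in> farey n"
    then have "0 < y" "y \<le> 1" "nat (snd (quotient_of y)) \<le> n" "ell p \<le> n"
      using assms by (auto simp: farey_def ell_def)
    then show "of_nat p + y \<in> comp_pos_atMost n"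
      by (simp add: comp_pos_atMost_def comp_pos_eq ceiling_of_nat_add add_nonneg_pos)
  qed
qed

lemma
  assumes "n \<ge> 1"
  shows finite_comp_pos_atMost: "finite (comp_pos_atMost n)"
    and card_comp_pos_atMost: "card (comp_pos_atMost n) = (n + 1) * Phi n"
proof -
  show "finite (comp_pos_atMost n)"
    using bij_betw_comp_pos_atMost[OF assms] finite_farey bij_betw_finite by blast
  have "card (comp_pos_atMost n) = card ({0..n} \<times> farey n)"
    using bij_betw_comp_pos_atMost[OF assms] by (rule bij_betw_same_card)
  then show "card (comp_pos_atMost n) = (n + 1) * Phi n"
    by (simp add: card_cartesian_product card_farey)
qed

lemma comp_Q_atMost_eq:
  assumes "n \<ge> 1"
  shows "{x. 1 \<le> comp_Q x \<and> comp_Q x \<le> n} = insert 0 (comp_pos_atMost n \<union> uminus ` comp_pos_atMost n)"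
proof (rule set_eqI)
  fix x :: rat
  have "x \<in> uminus ` comp_pos_atMost n \<longleftrightarrow> - x \<in> comp_pos_atMost n"
    by (metis image_iff minus_minus)
  then show "x \<in> {x. 1 \<le> comp_Q x \<and> comp_Q x \<le> n}
      \<longleftrightarrow> x \<in> insert 0 (comp_pos_atMost n \<union> uminus ` comp_pos_atMost n)"
    using assms comp_Q_ge_1[of x] by (cases x "0::rat" rule: linorder_cases)
      (auto simp: comp_Q_def comp_pos_atMost_def)
qed

lemma sigma_Q_eq_Phi:
  assumes "n \<ge> 1"
  shows "sigma_Q n = 2 * (n + 1) * Phi n + 1"
proof -
  let ?P = "comp_pos_atMost n"
  have "?P \<inter> uminus ` ?P = {}" "0 \<notin> ?P \<union> uminus ` ?P"
    by (auto simp: comp_pos_atMost_def)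
  then have "card (insert 0 (?P \<union> uminus ` ?P)) = Suc (card ?P + card (uminus ` ?P))"
    using finite_comp_pos_atMost[OF assms] by (simp add: card_Un_disjoint)
  also have "card (uminus ` ?P) = card ?P"
    by (simp add: card_image)
  finally show ?thesis
    unfolding sigma_Q_def comp_Q_atMost_eq[OF assms] card_comp_pos_atMost[OF assms] by simp
qed

lemma sigma_Q_upper_bound: "\<forall>\<^sub>F n in sequentially. real (sigma_Q n) < real n ^ 3 - real n"
  using eventually_ge_at_top[of 6]
proof eventually_elim
  case (elim n)
  have "real (2 * Phi n + 2) \<le> real (n * (n - 1))"
    using Phi_upper_bound[OF elim] by (simp only: of_nat_le_iff)
  then have "2 * real (Phi n) + 2 \<le> real n * (real n - 1)"
    using elim by (simp add: of_nat_diff)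
  have "real (sigma_Q n) = (real n + 1) * (2 * real (Phi n)) + 1"
    using sigma_Q_eq_Phi[of n] elim by (simp add: algebra_simps)
  also have "\<dots> \<le> (real n + 1) * (real n * (real n - 1) - 2) + 1"
    using \<open>2 * real (Phi n) + 2 \<le> real n * (real n - 1)\<close> by (intro add_right_mono mult_left_mono) auto
  also have "\<dots> < real n ^ 3 - real n"
    using elim by (simp add: algebra_simps power3_eq_cube)
  finally show ?case .
qed

lemma sigma_Q_lower_bound:
  "\<forall>\<^sub>F n in sequentially. 3 / 5 * (real n ^ 3 + real n ^ 2) < real (sigma_Q n)"
  using eventually_Phi_gt eventually_ge_at_top[of 1]
proof eventually_elim
  case (elim n)
  have "3 / 5 * (real n ^ 3 + real n ^ 2) = 2 * (real n + 1) * (3 / 10 * real n ^ 2)"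
    by (simp add: algebra_simps power3_eq_cube power2_eq_square)
  also have "\<dots> \<le> 2 * (real n + 1) * real (Phi n)"
    using elim(1) by (intro mult_left_mono) auto
  also have "\<dots> < real (sigma_Q n)"
    unfolding sigma_Q_eq_Phi[OF elim(2)] by (simp add: algebra_simps)
  finally show ?case .
qed

lemma F_approx_sigma_Q_cube: "F_approx (\<lambda>n. real (sigma_Q n)) (\<lambda>n. real n ^ 3)"
proof -
  have "\<forall>\<^sub>F n in sequentially. real n ^ 3 \<le> 2 * real (sigma_Q n)"
    using sigma_Q_lower_bound
  proof eventually_elim
    case (elim n)
    have "3 / 5 * (real n ^ 3 + real n ^ 2) = 3 / 5 * real n ^ 3 + 3 / 5 * real n ^ 2"
      by (rule distrib_left)
    moreover have "0 \<le> real n ^ 2" "0 \<le> real (sigma_Q n)"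
      by simp_all
    ultimately show ?case
      using elim by linarith
  qed
  moreover have "\<forall>\<^sub>F n in sequentially. real (sigma_Q n) \<le> real n ^ 3"
    using sigma_Q_upper_bound
  proof eventually_elim
    case (elim n)
    have "0 \<le> real n"
      by simp
    with elim show ?case
      by linarith
  qed
  ultimately show ?thesis
    unfolding F_approx_def by (intro conjI exI[of _ 2] exI[of _ 1]) simp_all
qed

theorem theorem12:
  shows "(\<forall>n\<ge>1. sigma_Q n = 2 * sigma_I n * (n + 1) + 1)
    \<and> (\<forall>n\<ge>1. sigma_Q n = 2 * (n + 1) * Phi n + 1)
    \<and> F_approx (\<lambda>n. real (sigma_Q n)) (\<lambda>n. real n ^ 3)
    \<and> F_less (\<lambda>n. 3/5 * (real n ^ 3 + real n ^ 2)) (\<lambda>n. real (sigma_Q n))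
    \<and> F_less (\<lambda>n. real (sigma_Q n)) (\<lambda>n. real n ^ 3 - real n)"
proof -
  have "\<forall>n\<ge>1. sigma_Q n = 2 * sigma_I n * (n + 1) + 1"
    using sigma_Q_eq_Phi by (simp add: sigma_I_eq_Phi mult_ac)
  then show ?thesis
    using sigma_Q_eq_Phi F_approx_sigma_Q_cube sigma_Q_lower_bound sigma_Q_upper_bound
    by (simp add: F_less_def)
qed

end
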